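(* For complex parameters $\nu,\mu$ such that all terms are defined, and complex $x$, $$e^{-x}\sum_{n\ge0}\frac{(-x)^n}{(\mu)_n}\left\{L_n^{(\nu)}(x)-\frac{x}{\nu+2}L_n^{(\nu+1)}(x)\right\}={}_3F_3\!\left[\begin{matrix}\nu+3,\ \frac{\mu}{2}+\frac{\nu}{2}+1,\ \frac{\mu}{2}+\frac{\nu}{2}+\frac12\\ \nu+2,\ \mu,\ \mu+\nu+1\end{matrix};-4x\right]+\frac{2x}{\mu}\,{}_3F_3\!\left[\begin{matrix}\nu+3,\ \frac{\mu}{2}+\frac{\nu}{2}+1,\ \frac{\mu}{2}+\frac{\nu}{2}+\frac32\\ \nu+2,\ \mu+1,\ \mu+\nu+2\end{matrix};-4x\right]$$ $$+\frac{x^2}{\mu(\mu+1)}\,{}_3F_3\!\left[\begin{matrix}\nu+3,\ \frac{\mu}{2}+\frac{\nu}{2}+2,\ \frac{\mu}{2}+\frac{\nu}{2}+\frac32\\ \nu+2,\ \mu+2,\ \mu+\nu+3\end{matrix};-4x\right].$$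
   Context: $(a)_k=a(a+1)\cdots(a+k-1)$ is the Pochhammer symbol; ${}_3F_3\!\left[\begin{matrix}a_1,a_2,a_3\\ b_1,b_2,b_3\end{matrix};z\right]=\sum_{k\ge0}\frac{(a_1)_k(a_2)_k(a_3)_k}{(b_1)_k(b_2)_k(b_3)_k}\frac{z^k}{k!}$. $L_n^{(\alpha)}(x)=\frac{(\alpha+1)_n}{n!}\sum_{k=0}^n\frac{(-n)_k}{(\alpha+1)_k}\frac{x^k}{k!}$ is the generalized Laguerre polynomial. *)

theory Defs
  imports "HOL-Analysis.Analysis"
begin

definition hyp3F3 :: "complex \<Rightarrow> complex \<Rightarrow> complex \<Rightarrow> complex \<Rightarrow> complex \<Rightarrow> complex \<Rightarrow> complex \<Rightarrow> complex" where
  "hyp3F3 a1 a2 a3 b1 b2 b3 z =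
     (\<Sum>k. (pochhammer a1 k * pochhammer a2 k * pochhammer a3 k) /
           (pochhammer b1 k * pochhammer b2 k * pochhammer b3 k) * z ^ k / fact k)"

definition laguerre :: "nat \<Rightarrow> complex \<Rightarrow> complex \<Rightarrow> complex" where
  "laguerre n \<alpha> x =
     pochhammer (\<alpha> + 1) n / fact n *
       (\<Sum>k\<le>n. pochhammer (- of_nat n) k / pochhammer (\<alpha> + 1) k * x ^ k / fact k)"

end

theory Submission
  imports Defs
begin

(* Kummer's transformation e^(-x) L_n^(a)(x) = sum_i (-1)^i (a+1+i)_n x^i / (n! i!) is a consequence
   of the Chu-Vandermonde sum. Inserted into sum_n (-x)^n L_n^(a)(x) / (mu)_n it yields an absolutely
   convergent double series whose antidiagonal sums are, by Chu-Vandermonde once more, the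
   coefficients (-x)^m (mu+a+m)_m / ((mu)_m m!). On the other side, the duplication formula
   (w)_(2k) = 4^k (w/2)_k ((w+1)/2)_k turns each 3F3 at -4x into a power series in -x with
   coefficients of the same shape. Comparing coefficients of x^m, where the factors x and x^2 shift
   the indices, leaves a polynomial identity. *)

lemma notin_nonpos_Ints_iff: "(a :: 'a :: ring_char_0) \<notin> \<int>\<^sub>\<le>\<^sub>0 \<longleftrightarrow> (\<forall>n. a \<noteq> - of_nat n)"
  by (auto elim!: nonpos_Ints_cases')

lemma pochhammer_neq_0_if_notin_nonpos_Ints:
  "(a :: 'a :: field_char_0) \<notin> \<int>\<^sub>\<le>\<^sub>0 \<Longrightarrow> pochhammer a n \<noteq> 0"
  by (auto simp: pochhammer_eq_0_iff)

lemma plus_of_nat_notin_nonpos_Ints: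
  "(a :: 'a :: ring_char_0) \<notin> \<int>\<^sub>\<le>\<^sub>0 \<Longrightarrow> a + of_nat n \<notin> \<int>\<^sub>\<le>\<^sub>0"
  using nonpos_Ints_diff_Nats[of "a + of_nat n" "of_nat n"] by auto

lemma plus_of_nat_neq_0_if_notin_nonpos_Ints:
  "(a :: 'a :: ring_char_0) \<notin> \<int>\<^sub>\<le>\<^sub>0 \<Longrightarrow> a + of_nat n \<noteq> 0"
  using plus_of_nat_notin_nonpos_Ints[of a n] by auto

section \<open>The Chu-Vandermonde sum\<close>

lemma sum_binomial_Suc:
  fixes f :: "nat \<Rightarrow> 'a::comm_ring_1"
  shows "(\<Sum>k\<le>Suc m. of_nat (Suc m choose k) * f k) =
         (\<Sum>k\<le>m. of_nat (m choose k) * f k) + (\<Sum>k\<le>m. of_nat (m choose k) * f (Suc k))"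
proof -
  have "(\<Sum>k\<le>Suc m. of_nat (Suc m choose k) * f k)
      = f 0 + (\<Sum>k\<le>m. of_nat (m choose k) * f (Suc k)) + (\<Sum>k\<le>m. of_nat (m choose Suc k) * f (Suc k))"
    by (subst sum.atMost_Suc_shift)
       (simp only: binomial_Suc_Suc of_nat_add distrib_right sum.distrib add.assoc binomial_n_0 of_nat_1 mult_1_left)
  moreover have "f 0 + (\<Sum>k\<le>m. of_nat (m choose Suc k) * f (Suc k)) = (\<Sum>k\<le>m. of_nat (m choose k) * f k)"
  proof -
    have "f 0 + (\<Sum>k\<le>m. of_nat (m choose Suc k) * f (Suc k)) = (\<Sum>k\<le>Suc m. of_nat (m choose k) * f k)"
      by (subst sum.atMost_Suc_shift) simp
    also have "\<dots> = (\<Sum>k\<le>m. of_nat (m choose k) * f k)"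
      by (simp add: binomial_eq_0)
    finally show ?thesis .
  qed
  ultimately show ?thesis by (simp add: algebra_simps)
qed

lemma fact_binomial_split:
  assumes "k \<le> n"
  shows "(fact n :: 'a :: {comm_semiring_1, semiring_char_0}) = of_nat (n choose k) * fact k * fact (n - k)"
proof -
  have "(fact n :: 'a) = of_nat (fact k * fact (n - k) * (n choose k))"
    using binomial_fact_lemma[OF assms] by (simp only: of_nat_fact)
  then show ?thesis
    by (simp only: of_nat_mult of_nat_fact mult_ac)
qed

lemma chu_vandermonde_pochhammer:
  fixes b c :: "'a::field"
  assumes "pochhammer c m \<noteq> 0"
  shows "(\<Sum>k\<le>m. of_nat (m choose k) * ((-1)^k * pochhammer b k / pochhammer c k))
         = pochhammer (c - b) m / pochhammer c m"
  using assms
proof (induction m arbitrary: b c)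
  case 0
  then show ?case by simp
next
  case (Suc m)
  have nz: "c \<noteq> 0" "pochhammer (c + 1) m \<noteq> 0" "pochhammer c m \<noteq> 0" "c + of_nat m \<noteq> 0"
    using Suc.prems pochhammer_rec[of c m] pochhammer_rec'[of c m] by auto
  have step: "(-1)^Suc k * pochhammer b (Suc k) / pochhammer c (Suc k)
      = - (b / c) * ((-1)^k * pochhammer (b + 1) k / pochhammer (c + 1) k)" for k
    by (simp add: pochhammer_rec)
  have "(\<Sum>k\<le>Suc m. of_nat (Suc m choose k) * ((-1)^k * pochhammer b k / pochhammer c k))
      = pochhammer (c - b) m / pochhammer c m
        - b / c * (\<Sum>k\<le>m. of_nat (m choose k) * ((-1)^k * pochhammer (b + 1) k / pochhammer (c + 1) k))"
    unfolding sum_binomial_Suc step Suc.IH[OF nz(3)]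
    by (simp add: sum_distrib_left sum_negf algebra_simps)
  also have "\<dots> = pochhammer (c - b) m / pochhammer c m - b / c * (pochhammer (c - b) m / pochhammer (c + 1) m)"
    using Suc.IH[OF nz(2), of "b + 1"] by simp
  also have "\<dots> = pochhammer (c - b) (Suc m) / pochhammer c (Suc m)"
  proof -
    have "pochhammer c m = c * pochhammer (c + 1) m / (c + of_nat m)"
      using pochhammer_rec[of c m] pochhammer_rec'[of c m] nz by (simp add: field_simps)
    moreover have "pochhammer c (Suc m) = c * pochhammer (c + 1) m"
      by (rule pochhammer_rec)
    moreover have "pochhammer (c - b) (Suc m) = pochhammer (c - b) m * (c - b + of_nat m)"
      by (simp add: pochhammer_rec')
    ultimately show ?thesis
      using nz by (simp only:) (simp add: field_simps)
  qed
  finally show ?case .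
qed

lemma chu_vandermonde_neg_of_nat:
  fixes a :: "'a :: field_char_0"
  assumes a: "pochhammer a i \<noteq> 0"
  shows "pochhammer a n * (\<Sum>k\<le>n. of_nat (i choose k) * ((-1)^k * pochhammer (- of_nat n) k / pochhammer a k))
         = pochhammer (a + of_nat i) n"
proof -
  define h where "h k = of_nat (i choose k) * ((-1)^k * pochhammer (- of_nat n) k / pochhammer a k)" for k
  have "(\<Sum>k\<le>n. h k) = (\<Sum>k\<le>n + i. h k)"
    by (rule sum.mono_neutral_left) (auto simp: h_def pochhammer_of_nat_eq_0_lemma)
  also have "\<dots> = (\<Sum>k\<le>i. h k)"
    by (rule sum.mono_neutral_right) (auto simp: h_def)
  also have "\<dots> = pochhammer (a + of_nat n) i / pochhammer a i"
    unfolding h_def using chu_vandermonde_pochhammer[OF a, of "- of_nat n"] by simp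
  finally have "pochhammer a n * (\<Sum>k\<le>n. h k) = pochhammer a n * pochhammer (a + of_nat n) i / pochhammer a i"
    by simp
  also have "\<dots> = pochhammer a i * pochhammer (a + of_nat i) n / pochhammer a i"
    by (metis pochhammer_product' add.commute)
  also have "\<dots> = pochhammer (a + of_nat i) n"
    using a by simp
  finally show ?thesis
    by (simp only: h_def)
qed

section \<open>Kummer's transformation of Laguerre polynomials\<close>

lemma exp_sums: "(\<lambda>n. z ^ n / fact n) sums exp (z :: 'a :: {real_normed_field, banach})"
  using exp_converges[of z] by (simp add: scaleR_conv_of_real divide_inverse mult.commute)

definition exp_laguerre_coeff :: "complex \<Rightarrow> complex \<Rightarrow> nat \<Rightarrow> nat \<Rightarrow> complex" where
  "exp_laguerre_coeff \<alpha> x n i = (-1)^i * pochhammer (\<alpha> + 1 + of_nat i) n / (fact n * fact i) * x^i"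

lemma exp_laguerre_coeff_convolution:
  fixes \<alpha> x :: complex
  assumes \<alpha>: "\<alpha> + 1 \<notin> \<int>\<^sub>\<le>\<^sub>0"
  shows "(\<Sum>k\<le>n. if k \<le> i then pochhammer (\<alpha> + 1) n / fact n *
            (pochhammer (- of_nat n) k / pochhammer (\<alpha> + 1) k * x^k / fact k) * ((-x)^(i-k) / fact (i-k))
          else 0)
       = exp_laguerre_coeff \<alpha> x n i"
proof -
  define h where "h k = of_nat (i choose k) * ((-1)^k * pochhammer (- of_nat n) k / pochhammer (\<alpha> + 1) k)" for k
  define C where "C = (-1)^i * x^i / fact i * (pochhammer (\<alpha> + 1) n / fact n)"
  have summand: "(if k \<le> i then pochhammer (\<alpha> + 1) n / fact n *
            (pochhammer (- of_nat n) k / pochhammer (\<alpha> + 1) k * x^k / fact k) * ((-x)^(i-k) / fact (i-k))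
          else 0) = C * h k" for k
  proof (cases "k \<le> i")
    case True
    then obtain j where i: "i = k + j" using le_Suc_ex by blast
    have fact_split: "fact (k + j) = of_nat (i choose k) * fact k * (fact j :: complex)"
      using fact_binomial_split[OF True] i by simp
    have sign: "(-1::complex)^(k+j) * (-1)^k = (-1)^j"
      by (simp add: power_add mult_ac flip: power_mult_distrib)
    have "C * h k = (-1)^(k+j) * (-1)^k * x^k * x^j * (pochhammer (\<alpha> + 1) n * pochhammer (- of_nat n) k)
           / (fact n * (fact k * fact j) * pochhammer (\<alpha> + 1) k)"
      unfolding h_def C_def i fact_split using True by (simp only: power_add) (simp add: divide_simps)
    also have "\<dots> = pochhammer (\<alpha> + 1) n / fact n *
            (pochhammer (- of_nat n) k / pochhammer (\<alpha> + 1) k * x^k / fact k) * ((-x)^(i-k) / fact (i-k))"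
      unfolding sign i by (simp add: power_minus[of x] mult_ac)
    finally show ?thesis using True by simp
  qed (simp add: h_def)
  have sum_h: "pochhammer (\<alpha> + 1) n * (\<Sum>k\<le>n. h k) = pochhammer (\<alpha> + 1 + of_nat i) n"
    unfolding h_def
    by (rule chu_vandermonde_neg_of_nat[OF pochhammer_neq_0_if_notin_nonpos_Ints[OF \<alpha>]])
  show ?thesis
    unfolding summand sum_distrib_left[symmetric] C_def exp_laguerre_coeff_def
    by (simp add: mult_ac flip: sum_h)
qed

lemma exp_laguerre_sums:
  fixes \<alpha> x :: complex
  assumes \<alpha>: "\<alpha> + 1 \<notin> \<int>\<^sub>\<le>\<^sub>0"
  shows "exp_laguerre_coeff \<alpha> x n sums (exp (-x) * laguerre n \<alpha> x)"
proof -
  define c where "c k = pochhammer (\<alpha> + 1) n / fact n * (pochhammer (- of_nat n) k / pochhammer (\<alpha> + 1) k * x^k / fact k)" for k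
  define g where "g k i = (if k \<le> i then c k * ((-x)^(i-k) / fact (i-k)) else 0)" for k i
  have "g k sums (c k * exp (-x))" for k
  proof -
    have "(\<lambda>i. c k * ((-x)^i / fact i)) sums (c k * exp (-x))"
      by (rule sums_mult[OF exp_sums])
    moreover have "(\<lambda>i. g k (i + k)) = (\<lambda>i. c k * ((-x)^i / fact i))"
      by (simp add: g_def)
    ultimately have "(\<lambda>i. g k (i + k)) sums (c k * exp (-x))"
      by (simp only:)
    moreover have "(\<Sum>i<k. g k i) = 0"
      by (simp add: g_def)
    ultimately show ?thesis
      by (simp add: sums_iff_shift)
  qed
  then have "(\<lambda>i. \<Sum>k\<le>n. g k i) sums (\<Sum>k\<le>n. c k * exp (-x))"
    by (rule sums_sum)
  moreover have "(\<Sum>k\<le>n. c k * exp (-x)) = exp (-x) * laguerre n \<alpha> x"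
    by (simp add: laguerre_def c_def sum_distrib_left sum_distrib_right mult_ac)
  moreover have "(\<Sum>k\<le>n. g k i) = exp_laguerre_coeff \<alpha> x n i" for i
    unfolding g_def c_def by (rule exp_laguerre_coeff_convolution[OF \<alpha>])
  ultimately show ?thesis
    by (simp add: fun_eq_iff)
qed

section \<open>The double series\<close>

lemma norm_pochhammer_le:
  fixes z :: "'a :: real_normed_field"
  assumes "norm z \<le> r"
  shows "norm (pochhammer z n) \<le> pochhammer r n"
proof -
  have "norm (pochhammer z n) = (\<Prod>i<n. norm (z + of_nat i))"
    by (simp add: pochhammer_prod prod_norm atLeast0LessThan)
  also have "\<dots> \<le> (\<Prod>i<n. r + of_nat i)"
  proof (rule prod_mono)
    fix i
    show "0 \<le> norm (z + of_nat i) \<and> norm (z + of_nat i) \<le> r + of_nat i"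
      using norm_triangle_ineq[of z "of_nat i"] assms by simp
  qed
  finally show ?thesis
    by (simp add: pochhammer_prod atLeast0LessThan)
qed

lemma pochhammer_of_nat_le: "pochhammer (real m) n \<le> fact n * 2 ^ (m + n)"
proof (cases m)
  case 0
  then show ?thesis by (cases n) (auto simp: pochhammer_0_left)
next
  case (Suc m')
  have "pochhammer (real m) n / fact n = real ((m' + n) choose n)"
    by (simp add: gbinomial_pochhammer' Suc algebra_simps binomial_gbinomial)
  also have "\<dots> \<le> 2 ^ (m' + n)"
    using binomial_le_pow2[of "m' + n" n] by (simp flip: of_nat_power)
  also have "\<dots> \<le> 2 ^ (m + n)"
    by (simp add: Suc)
  finally show ?thesis
    by (simp add: divide_le_eq mult.commute)
qed

lemma summable_power_div_norm_pochhammer: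
  fixes \<mu> :: "'a :: real_normed_field" and y :: real
  assumes \<mu>: "\<mu> \<notin> \<int>\<^sub>\<le>\<^sub>0" and y: "y \<ge> 0"
  shows "summable (\<lambda>n. y ^ n / norm (pochhammer \<mu> n))"
proof (rule summable_ratio_test[where c = "1/2" and N = "nat \<lceil>norm \<mu> + 2 * y\<rceil>"])
  fix n assume n: "n \<ge> nat \<lceil>norm \<mu> + 2 * y\<rceil>"
  have "real n - norm \<mu> \<le> norm (\<mu> + of_nat n)"
    using norm_triangle_ineq2[of "of_nat n" "- \<mu>"] by (simp add: add.commute norm_minus_commute)
  with n have big: "2 * y \<le> norm (\<mu> + of_nat n)"
    by linarith
  have pos: "norm (\<mu> + of_nat n) > 0"
    using plus_of_nat_neq_0_if_notin_nonpos_Ints[OF \<mu>] by simp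
  have "norm (y ^ Suc n / norm (pochhammer \<mu> (Suc n)))
        = (y ^ n / norm (pochhammer \<mu> n)) * (y / norm (\<mu> + of_nat n))"
    using y by (simp add: pochhammer_rec' norm_mult mult_ac)
  also have "\<dots> \<le> (y ^ n / norm (pochhammer \<mu> n)) * (1/2)"
    using big pos y by (intro mult_left_mono) (auto simp: field_simps)
  finally show "norm (y ^ Suc n / norm (pochhammer \<mu> (Suc n))) \<le> 1/2 * norm (y ^ n / norm (pochhammer \<mu> n))"
    using y by (simp add: mult.commute)
qed simp

lemma norm_exp_laguerre_coeff_le:
  fixes \<alpha> x :: complex and N :: nat
  assumes N: "norm (\<alpha> + 1) \<le> real N"
  shows "norm (exp_laguerre_coeff \<alpha> x n i) \<le> 2^(N + n) * ((2 * norm x)^i / fact i)"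
proof -
  have "norm (\<alpha> + 1 + of_nat i) \<le> real (N + i)"
    using norm_triangle_ineq[of "\<alpha> + 1" "of_nat i"] N by simp
  then have "norm (pochhammer (\<alpha> + 1 + of_nat i) n) \<le> pochhammer (real (N + i)) n"
    by (rule norm_pochhammer_le)
  also have "\<dots> \<le> fact n * 2 ^ (N + i + n)"
    by (rule pochhammer_of_nat_le)
  finally have bound: "norm (pochhammer (\<alpha> + 1 + of_nat i) n) \<le> fact n * 2 ^ (N + i + n)" .
  have "norm (exp_laguerre_coeff \<alpha> x n i) = norm (pochhammer (\<alpha> + 1 + of_nat i) n) / (fact n * fact i) * norm x ^ i"
    by (simp add: exp_laguerre_coeff_def norm_mult norm_divide norm_power)
  also have "\<dots> \<le> (fact n * 2 ^ (N + i + n)) / (fact n * fact i) * norm x ^ i"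
    by (intro mult_right_mono divide_right_mono bound) auto
  also have "\<dots> = 2^(N + n) * ((2 * norm x)^i / fact i)"
    by (simp add: power_add power_mult_distrib field_simps)
  finally show ?thesis .
qed

lemma abs_summable_on_product_nat:
  fixes a b :: "nat \<Rightarrow> real"
  assumes "summable a" "\<And>n. a n \<ge> 0" "summable b" "\<And>n. b n \<ge> 0"
  shows "(\<lambda>p. norm (a (fst p) * b (snd p))) summable_on UNIV \<times> UNIV"
proof -
  have "Infinite_Set_Sum.abs_summable_on a UNIV" "Infinite_Set_Sum.abs_summable_on b UNIV"
    using assms by (simp_all add: abs_summable_on_nat_iff')
  then have "Infinite_Set_Sum.abs_summable_on (\<lambda>(n, i). a n * b i) (UNIV \<times> UNIV)"
    by (intro abs_summable_on_product) simp_all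
  then show ?thesis
    by (simp add: abs_summable_equivalent[symmetric] case_prod_beta)
qed

definition laguerre_series_coeff :: "complex \<Rightarrow> complex \<Rightarrow> complex \<Rightarrow> nat \<Rightarrow> complex" where
  "laguerre_series_coeff \<mu> \<alpha> x m = (-x)^m * pochhammer (\<mu> + \<alpha> + of_nat m) m / (pochhammer \<mu> m * fact m)"

lemma laguerre_antidiagonal_sum:
  fixes \<alpha> \<mu> x :: complex
  assumes \<mu>: "\<mu> \<notin> \<int>\<^sub>\<le>\<^sub>0"
  shows "(\<Sum>n\<le>m. (-x)^n / pochhammer \<mu> n * exp_laguerre_coeff \<alpha> x n (m - n)) = laguerre_series_coeff \<mu> \<alpha> x m"
proof -
  have summand: "(-x)^n / pochhammer \<mu> n * exp_laguerre_coeff \<alpha> x n (m - n)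
     = (-x)^m / fact m * (of_nat (m choose n) * ((-1)^n * pochhammer (-(\<alpha> + of_nat m)) n / pochhammer \<mu> n))"
    if n: "n \<le> m" for n
  proof -
    have "\<alpha> + 1 + of_nat (m-n) = \<alpha> + of_nat m - of_nat n + 1"
      using n by (simp add: of_nat_diff)
    then have poch: "pochhammer (\<alpha> + 1 + of_nat (m-n)) n = (-1)^n * pochhammer (-(\<alpha> + of_nat m)) n"
      by (simp only: pochhammer_minus')
    have "(-x)^n * ((-1)^(m-n) * x^(m-n)) = (-x)^m"
      using n by (simp flip: power_minus power_add)
    moreover have "(-1::complex)^n * (-1)^n = 1"
      by (simp flip: power_mult_distrib)
    moreover have "of_nat (m choose n) \<noteq> (0::complex)"
      using n by simp
    ultimately show ?thesis
      unfolding exp_laguerre_coeff_def poch fact_binomial_split[OF n, where 'a = complex]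
      by (simp add: field_simps)
  qed
  have "(\<Sum>n\<le>m. (-x)^n / pochhammer \<mu> n * exp_laguerre_coeff \<alpha> x n (m - n))
      = (-x)^m / fact m * (\<Sum>n\<le>m. of_nat (m choose n) * ((-1)^n * pochhammer (-(\<alpha> + of_nat m)) n / pochhammer \<mu> n))"
    unfolding sum_distrib_left by (rule sum.cong[OF refl], rule summand) simp
  also have "(\<Sum>n\<le>m. of_nat (m choose n) * ((-1)^n * pochhammer (-(\<alpha> + of_nat m)) n / pochhammer \<mu> n))
      = pochhammer (\<mu> - (-(\<alpha> + of_nat m))) m / pochhammer \<mu> m"
    by (rule chu_vandermonde_pochhammer[OF pochhammer_neq_0_if_notin_nonpos_Ints[OF \<mu>]])
  also have "\<mu> - (-(\<alpha> + of_nat m)) = \<mu> + \<alpha> + of_nat m"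
    by simp
  finally show ?thesis
    by (simp add: laguerre_series_coeff_def mult.commute)
qed

lemma laguerre_double_term_abs_summable:
  fixes \<alpha> \<mu> x :: complex
  assumes \<mu>: "\<mu> \<notin> \<int>\<^sub>\<le>\<^sub>0"
  shows "(\<lambda>p. norm ((-x)^fst p / pochhammer \<mu> (fst p) * exp_laguerre_coeff \<alpha> x (fst p) (snd p)))
           summable_on UNIV \<times> UNIV"
proof -
  obtain N :: nat where N: "norm (\<alpha> + 1) \<le> real N"
    using real_arch_simple by blast
  define a where "a n = 2^N * ((2 * norm x)^n / norm (pochhammer \<mu> n))" for n
  define b where "b i = (2 * norm x)^i / fact i" for i :: nat
  have "(\<lambda>p. norm (a (fst p) * b (snd p))) summable_on UNIV \<times> UNIV"
  proof (rule abs_summable_on_product_nat)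
    show "summable a"
      unfolding a_def by (intro summable_mult summable_power_div_norm_pochhammer[OF \<mu>]) simp
    show "summable b"
      unfolding b_def by (rule sums_summable[OF exp_sums])
  qed (simp_all add: a_def b_def)
  then show ?thesis
  proof (rule Infinite_Sum.abs_summable_on_comparison_test)
    fix p :: "nat \<times> nat"
    obtain n i where p: "p = (n, i)"
      by (cases p)
    have "norm ((-x)^n / pochhammer \<mu> n * exp_laguerre_coeff \<alpha> x n i)
        = norm x ^ n / norm (pochhammer \<mu> n) * norm (exp_laguerre_coeff \<alpha> x n i)"
      by (simp add: norm_mult norm_divide norm_power)
    also have "\<dots> \<le> norm x ^ n / norm (pochhammer \<mu> n) * (2^(N + n) * ((2 * norm x)^i / fact i))"
      by (intro mult_left_mono norm_exp_laguerre_coeff_le[OF N]) simp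
    also have "\<dots> = a n * b i"
      by (simp add: a_def b_def power_add power_mult_distrib)
    finally show "norm ((-x)^fst p / pochhammer \<mu> (fst p) * exp_laguerre_coeff \<alpha> x (fst p) (snd p))
        \<le> norm (a (fst p) * b (snd p))"
      by (simp add: p a_def b_def)
  qed
qed

lemma laguerre_double_series:
  fixes \<alpha> \<mu> x :: complex
  assumes \<alpha>: "\<alpha> + 1 \<notin> \<int>\<^sub>\<le>\<^sub>0" and \<mu>: "\<mu> \<notin> \<int>\<^sub>\<le>\<^sub>0"
  obtains S where "(\<lambda>n. (-x)^n / pochhammer \<mu> n * laguerre n \<alpha> x) sums (exp x * S)"
    and "laguerre_series_coeff \<mu> \<alpha> x sums S"
proof -
  define T where "T p = (-x)^fst p / pochhammer \<mu> (fst p) * exp_laguerre_coeff \<alpha> x (fst p) (snd p)" for p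
  obtain S where S: "(T has_sum S) (UNIV \<times> UNIV)"
    using abs_summable_summable[OF laguerre_double_term_abs_summable[OF \<mu>, of x \<alpha>]]
    unfolding summable_on_def T_def by blast
  have row: "((\<lambda>i. T (n, i)) has_sum exp (-x) * ((-x)^n / pochhammer \<mu> n * laguerre n \<alpha> x)) UNIV" for n
  proof -
    have "(\<lambda>i. T (n, i)) summable_on UNIV"
      using summable_on_SigmaD1[of "\<lambda>n i. T (n, i)" UNIV "\<lambda>_. UNIV" n] S
      by (auto simp: summable_on_def)
    moreover have "(\<lambda>i. T (n, i)) sums (exp (-x) * ((-x)^n / pochhammer \<mu> n * laguerre n \<alpha> x))"
      using sums_mult[OF exp_laguerre_sums[OF \<alpha>], of "(-x)^n / pochhammer \<mu> n" x n]
      by (simp add: T_def mult_ac)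
    ultimately show ?thesis
      by (metis has_sum_imp_sums has_sum_infsum sums_unique2)
  qed
  have "((\<lambda>n. exp (-x) * ((-x)^n / pochhammer \<mu> n * laguerre n \<alpha> x)) has_sum S) UNIV"
    by (rule has_sum_SigmaD[OF S row])
  then have "(\<lambda>n. exp x * (exp (-x) * ((-x)^n / pochhammer \<mu> n * laguerre n \<alpha> x))) sums (exp x * S)"
    by (intro sums_mult has_sum_imp_sums)
  then have rows: "(\<lambda>n. (-x)^n / pochhammer \<mu> n * laguerre n \<alpha> x) sums (exp x * S)"
    by (simp add: mult.assoc[symmetric] flip: exp_add)
  define g where "g = (\<lambda>(m::nat, n::nat). (n, m - n))"
  have "bij_betw g (SIGMA m:UNIV. {..m}) (UNIV \<times> UNIV)"
    by (rule bij_betw_byWitness[where f' = "\<lambda>(n, i). (n + i, n)"]) (auto simp: g_def)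
  then have "((\<lambda>p. T (g p)) has_sum S) (SIGMA m:UNIV. {..m})"
    using has_sum_reindex_bij_betw S by blast
  then have "((\<lambda>m. \<Sum>n\<le>m. T (g (m, n))) has_sum S) UNIV"
    by (rule has_sum_SigmaD) simp
  moreover have "(\<Sum>n\<le>m. T (g (m, n))) = laguerre_series_coeff \<mu> \<alpha> x m" for m
    unfolding g_def T_def using laguerre_antidiagonal_sum[OF \<mu>, where m = m and x = x and \<alpha> = \<alpha>] by simp
  ultimately have "laguerre_series_coeff \<mu> \<alpha> x sums S"
    using has_sum_imp_sums by fastforce
  with rows show thesis
    by (rule that)
qed

section \<open>The duplication formula for the 3F3 series\<close>

lemma norm_plus_of_nat_le_twice:
  fixes a b :: "'a :: real_normed_algebra_1"
  assumes "real k \<ge> norm a + 2 * norm b"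
  shows "norm (a + of_nat k) \<le> 2 * norm (b + of_nat k)"
proof -
  have "norm (a + of_nat k) \<le> norm a + real k"
    using norm_triangle_ineq[of a "of_nat k"] by simp
  moreover have "real k - norm b \<le> norm (b + of_nat k)"
    using norm_triangle_ineq2[of "of_nat k" "- b"] by (simp add: add.commute norm_minus_commute)
  ultimately show ?thesis
    using assms by linarith
qed

lemma summable_hyp3F3:
  fixes a1 a2 a3 b1 b2 b3 z :: complex
  assumes b: "b1 \<notin> \<int>\<^sub>\<le>\<^sub>0" "b2 \<notin> \<int>\<^sub>\<le>\<^sub>0" "b3 \<notin> \<int>\<^sub>\<le>\<^sub>0"
  shows "summable (\<lambda>k. pochhammer a1 k * pochhammer a2 k * pochhammer a3 k /
           (pochhammer b1 k * pochhammer b2 k * pochhammer b3 k) * z ^ k / fact k)"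
    (is "summable ?f")
proof (rule summable_ratio_test[where c = "1/2" and
      N = "nat \<lceil>norm a1 + norm a2 + norm a3 + 2 * (norm b1 + norm b2 + norm b3) + 16 * norm z\<rceil>"])
  fix k assume "k \<ge> nat \<lceil>norm a1 + norm a2 + norm a3 + 2 * (norm b1 + norm b2 + norm b3) + 16 * norm z\<rceil>"
  then have k: "real k \<ge> norm a1 + norm a2 + norm a3 + 2 * (norm b1 + norm b2 + norm b3) + 16 * norm z"
    by linarith
  have nz: "b1 + of_nat k \<noteq> 0" "b2 + of_nat k \<noteq> 0" "b3 + of_nat k \<noteq> 0"
    using b by (simp_all add: plus_of_nat_neq_0_if_notin_nonpos_Ints)
  define d where "d = norm (b1 + of_nat k) * norm (b2 + of_nat k) * norm (b3 + of_nat k)"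
  have d: "d > 0"
    unfolding d_def using nz by simp
  define R where "R = (a1 + of_nat k) * (a2 + of_nat k) * (a3 + of_nat k) /
      ((b1 + of_nat k) * (b2 + of_nat k) * (b3 + of_nat k)) * z / of_nat (Suc k)"
  have rec: "?f (Suc k) = ?f k * R"
    unfolding R_def using nz pochhammer_neq_0_if_notin_nonpos_Ints[OF b(1), of k]
      pochhammer_neq_0_if_notin_nonpos_Ints[OF b(2), of k] pochhammer_neq_0_if_notin_nonpos_Ints[OF b(3), of k]
    by (simp add: pochhammer_rec' field_simps)
  have "norm (a1 + of_nat k) * norm (a2 + of_nat k) * norm (a3 + of_nat k)
      \<le> (2 * norm (b1 + of_nat k)) * (2 * norm (b2 + of_nat k)) * (2 * norm (b3 + of_nat k))"
    by (intro mult_mono norm_plus_of_nat_le_twice) (use k in \<open>auto intro: order_trans[rotated]\<close>)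
  then have num: "norm (a1 + of_nat k) * norm (a2 + of_nat k) * norm (a3 + of_nat k) \<le> 8 * d"
    by (simp add: d_def)
  have "norm R = norm (a1 + of_nat k) * norm (a2 + of_nat k) * norm (a3 + of_nat k) * norm z / (d * real (Suc k))"
    unfolding R_def d_def by (simp add: norm_mult norm_divide del: of_nat_Suc)
  also have "\<dots> \<le> 8 * d * norm z / (d * real (Suc k))"
    using d by (intro divide_right_mono mult_right_mono num) auto
  also have "\<dots> = 8 * norm z / real (Suc k)"
    using d by simp
  also have "\<dots> \<le> 1/2"
  proof -
    have "16 * norm z \<le> real (Suc k)"
      using k norm_ge_zero[of a1] norm_ge_zero[of a2] norm_ge_zero[of a3]
        norm_ge_zero[of b1] norm_ge_zero[of b2] norm_ge_zero[of b3]
      unfolding of_nat_Suc by argo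
    then show ?thesis
      by (simp add: field_simps del: of_nat_Suc)
  qed
  finally have "norm R \<le> 1/2" .
  then show "norm (?f (Suc k)) \<le> 1/2 * norm (?f k)"
    unfolding rec norm_mult using mult_left_mono[of "norm R" "1/2" "norm (?f k)"]
    by (simp add: mult.commute)
qed simp

lemma hyp3F3_swap: "hyp3F3 a1 a2 a3 b1 b2 b3 z = hyp3F3 a1 a3 a2 b1 b2 b3 z"
  by (simp add: hyp3F3_def mult_ac)

definition hyp3F3_dup_coeff :: "complex \<Rightarrow> complex \<Rightarrow> complex \<Rightarrow> complex \<Rightarrow> nat \<Rightarrow> complex" where
  "hyp3F3_dup_coeff a w b x k =
     (a + of_nat k) / a * pochhammer (w + of_nat k) k / (pochhammer b k * fact k) * (-x)^k"

lemma hyp3F3_duplication_sums: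
  fixes a b w p q x :: complex
  assumes a: "a \<notin> \<int>\<^sub>\<le>\<^sub>0" and b: "b \<notin> \<int>\<^sub>\<le>\<^sub>0" and w: "w \<notin> \<int>\<^sub>\<le>\<^sub>0"
      and p: "2 * p = w" and q: "2 * q = w + 1"
  shows "hyp3F3_dup_coeff a w b x sums hyp3F3 (a + 1) p q a b w (-4 * x)"
proof -
  have nz: "a \<noteq> 0" "pochhammer a k \<noteq> 0" "pochhammer b k \<noteq> 0" "pochhammer w k \<noteq> 0" for k
    using plus_of_nat_neq_0_if_notin_nonpos_Ints[OF a, of 0] a b w
    by (simp_all add: pochhammer_neq_0_if_notin_nonpos_Ints)
  have double: "4^k * (pochhammer p k * pochhammer q k) = pochhammer w k * pochhammer (w + of_nat k) k" for k
  proof -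
    have "q = p + 1/2"
      using p q by (simp add: field_simps)
    then have "pochhammer w (2 * k) = 4^k * (pochhammer p k * pochhammer q k)"
      using pochhammer_double[of p k] p by (simp add: power_mult)
    then show ?thesis
      by (simp add: mult_2 pochhammer_product')
  qed
  have shift: "pochhammer (a + 1) k = pochhammer a k * (a + of_nat k) / a" for k
    using pochhammer_rec[of a k] pochhammer_rec'[of a k] nz by (simp add: field_simps)
  have "pochhammer (a + 1) k * pochhammer p k * pochhammer q k /
           (pochhammer a k * pochhammer b k * pochhammer w k) * (-4 * x) ^ k / fact k
        = hyp3F3_dup_coeff a w b x k" for k
  proof -
    have "(-4 * x) ^ k = 4^k * (-x)^k"
      by (simp flip: power_mult_distrib)
    then show ?thesis
      unfolding hyp3F3_dup_coeff_def shift using double[of k] nz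
      by (simp add: field_simps)
  qed
  then show ?thesis
    using summable_sums[OF summable_hyp3F3[OF a b w, of "a + 1" p q "-4 * x"]]
    by (simp add: hyp3F3_def)
qed

section \<open>Comparison of coefficients\<close>

lemma pochhammer_add_2_left:
  "pochhammer z (n + 2) = z * pochhammer (z + 1) n * (z + 1 + of_nat n)"
  unfolding numeral_2_eq_2 add_Suc_right add_0_right
  by (subst pochhammer_rec, subst pochhammer_rec') (simp add: mult_ac)

lemma pochhammer_add_2_right:
  "pochhammer z (n + 2) = pochhammer z n * (z + of_nat n) * (z + of_nat n + 1)"
  by (simp add: numeral_2_eq_2 pochhammer_rec' mult_ac add_ac)

definition seq_shift :: "(nat \<Rightarrow> 'a :: zero) \<Rightarrow> nat \<Rightarrow> 'a" where
  "seq_shift f n = (case n of 0 \<Rightarrow> 0 | Suc m \<Rightarrow> f m)"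

lemma sums_seq_shift:
  fixes f :: "nat \<Rightarrow> 'a :: real_normed_vector"
  shows "f sums s \<Longrightarrow> seq_shift f sums s"
  using sums_Suc_iff[of "seq_shift f" s] by (simp add: seq_shift_def)

lemma pochhammer_div_add_2:
  fixes \<mu> :: "'a :: field_char_0"
  assumes \<mu>: "\<mu> \<notin> \<int>\<^sub>\<le>\<^sub>0"
  shows "pochhammer \<mu> (k+1) = pochhammer \<mu> (k+2) / (\<mu> + of_nat k + 1)"
    and "pochhammer (\<mu>+1) (k+1) = pochhammer \<mu> (k+2) / \<mu>"
    and "pochhammer (\<mu>+2) k = pochhammer \<mu> (k+2) / (\<mu> * (\<mu>+1))"
proof -
  have nz: "\<mu> \<noteq> 0" "\<mu> + 1 \<noteq> 0" "\<mu> + of_nat k + 1 \<noteq> 0"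
    using plus_of_nat_neq_0_if_notin_nonpos_Ints[OF \<mu>, of 0] plus_of_nat_neq_0_if_notin_nonpos_Ints[OF \<mu>, of 1]
      plus_of_nat_neq_0_if_notin_nonpos_Ints[OF \<mu>, of "k+1"]
    by (simp_all add: add_ac)
  show "pochhammer \<mu> (k+1) = pochhammer \<mu> (k+2) / (\<mu> + of_nat k + 1)"
    using nz by (simp add: pochhammer_rec' add_ac)
  show "pochhammer (\<mu>+1) (k+1) = pochhammer \<mu> (k+2) / \<mu>"
    using nz by (simp add: pochhammer_rec)
  show "pochhammer (\<mu>+2) k = pochhammer \<mu> (k+2) / (\<mu> * (\<mu>+1))"
    using nz by (simp add: pochhammer_rec numeral_2_eq_2 add.assoc)
qed

lemma fact_div_add_2:
  shows "(fact (k+1) :: 'a :: field_char_0) = fact (k+2) / (of_nat k + 2)"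
    and "(fact k :: 'a :: field_char_0) = fact (k+2) / ((of_nat k + 1) * (of_nat k + 2))"
proof -
  have nz: "(of_nat k + 1 :: 'a) \<noteq> 0" "(of_nat k + 2 :: 'a) \<noteq> 0"
    using of_nat_neq_0[of k, where 'a = 'a] of_nat_neq_0[of "Suc k", where 'a = 'a] by (simp_all add: add_ac)
  have fact1: "(fact (k+2) :: 'a) = (of_nat k + 2) * fact (k+1)"
    by (simp add: numeral_2_eq_2 algebra_simps)
  show "(fact (k+1) :: 'a) = fact (k+2) / (of_nat k + 2)"
    unfolding fact1 using nz by simp
  have fact0: "(fact (k+2) :: 'a) = ((of_nat k + 1) * (of_nat k + 2)) * fact k"
    by (simp add: numeral_2_eq_2 algebra_simps)
  show "(fact k :: 'a) = fact (k+2) / ((of_nat k + 1) * (of_nat k + 2))"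
    unfolding fact0 using nz by simp
qed

lemma coeff_identity_add_2:
  fixes \<mu> a x P :: complex and k :: nat
  assumes \<mu>: "\<mu> \<notin> \<int>\<^sub>\<le>\<^sub>0" and a: "a \<noteq> 0"
  defines "K \<equiv> (of_nat k :: complex)"
  shows "(-x)^(k+2) * ((\<mu>+a+K) * P * (\<mu>+a+2*K+1)) / (pochhammer \<mu> (k+2) * fact (k+2))
     - x/a * ((-x)^(k+1) * ((\<mu>+a+K) * P) / (pochhammer \<mu> (k+1) * fact (k+1)))
   = (a+K+2)/a * (P * (\<mu>+a+2*K+1) * (\<mu>+a+2*K+2)) / (pochhammer \<mu> (k+2) * fact (k+2)) * (-x)^(k+2)
     + 2*x/\<mu> * ((a+K+1)/a * (P * (\<mu>+a+2*K+1)) / (pochhammer (\<mu>+1) (k+1) * fact (k+1)) * (-x)^(k+1))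
     + x^2/(\<mu>*(\<mu>+1)) * ((a+K)/a * P / (pochhammer (\<mu>+2) k * fact k) * (-x)^k)"
proof -
  \<comment> \<open>\<open>P\<close> stands for the Pochhammer factor \<open>(\<mu> + a + k + 1)\<^sub>k\<close> shared by all five terms.\<close>
  define U W A1 A2 where "U = \<mu> + K + 1" and "W = \<mu> * (\<mu> + 1)" and "A1 = K + 1" and "A2 = K + 2"
  define M F where "M = pochhammer \<mu> (k+2)" and "F = (fact (k+2) :: complex)"
  define C where "C = (-x)^k * x^2 * P / (M * F * a)"
  have nz: "\<mu> \<noteq> 0" "W \<noteq> 0" "U \<noteq> 0" "A1 \<noteq> 0" "A2 \<noteq> 0" "M \<noteq> 0" "F \<noteq> 0"
    using plus_of_nat_neq_0_if_notin_nonpos_Ints[OF \<mu>, of 0] plus_of_nat_neq_0_if_notin_nonpos_Ints[OF \<mu>, of 1]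
      plus_of_nat_neq_0_if_notin_nonpos_Ints[OF \<mu>, of "k+1"] pochhammer_neq_0_if_notin_nonpos_Ints[OF \<mu>]
      of_nat_neq_0[of k, where 'a = complex] of_nat_neq_0[of "Suc k", where 'a = complex]
    by (simp_all add: W_def U_def A1_def A2_def K_def M_def F_def add_ac)
  have M: "pochhammer \<mu> (k+1) = M / U" "pochhammer (\<mu>+1) (k+1) = M / \<mu>" "pochhammer (\<mu>+2) k = M / W"
    using pochhammer_div_add_2[OF \<mu>, of k] by (simp_all add: M_def U_def W_def K_def)
  have F: "fact (k+1) = F / A2" "fact k = F / (A1 * A2)"
    using fact_div_add_2[of k] by (simp_all add: F_def A1_def A2_def K_def)
  have X: "(-x)^(k+2) = (-x)^k * x^2" "(-x)^(k+1) = - ((-x)^k * x)"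
    by (simp_all add: power2_eq_square)
  have t1: "(-x)^(k+2) * ((\<mu>+a+K) * P * (\<mu>+a+2*K+1)) / (pochhammer \<mu> (k+2) * fact (k+2))
      = C * (a * (\<mu>+a+K) * (\<mu>+a+2*K+1))"
    unfolding X C_def M_def[symmetric] F_def[symmetric] using nz a by (simp add: field_simps)
  have t2: "x/a * ((-x)^(k+1) * ((\<mu>+a+K) * P) / (pochhammer \<mu> (k+1) * fact (k+1)))
      = - C * ((\<mu>+a+K) * U * A2)"
    unfolding X F M C_def using nz a by (simp add: field_simps power2_eq_square)
  have t3: "(a+K+2)/a * (P * (\<mu>+a+2*K+1) * (\<mu>+a+2*K+2)) / (pochhammer \<mu> (k+2) * fact (k+2)) * (-x)^(k+2)
      = C * ((a+K+2) * (\<mu>+a+2*K+1) * (\<mu>+a+2*K+2))"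
    unfolding X C_def M_def[symmetric] F_def[symmetric] using nz a by (simp add: field_simps)
  have t4: "2*x/\<mu> * ((a+K+1)/a * (P * (\<mu>+a+2*K+1)) / (pochhammer (\<mu>+1) (k+1) * fact (k+1)) * (-x)^(k+1))
      = - C * (2 * (a+K+1) * (\<mu>+a+2*K+1) * A2)"
    unfolding X F M C_def using nz a by (simp add: field_simps power2_eq_square)
  have t5: "x^2/(\<mu>*(\<mu>+1)) * ((a+K)/a * P / (pochhammer (\<mu>+2) k * fact k) * (-x)^k)
      = C * ((a+K) * A1 * A2)"
    unfolding F M C_def W_def[symmetric] using nz a by (simp add: field_simps)
  have "a * (\<mu>+a+K) * (\<mu>+a+2*K+1) + (\<mu>+a+K) * U * A2
      = (a+K+2) * (\<mu>+a+2*K+1) * (\<mu>+a+2*K+2) - 2 * (a+K+1) * (\<mu>+a+2*K+1) * A2 + (a+K) * A1 * A2"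
    by (simp add: U_def A1_def A2_def algebra_simps)
  then have "C * (a * (\<mu>+a+K) * (\<mu>+a+2*K+1) + (\<mu>+a+K) * U * A2)
      = C * ((a+K+2) * (\<mu>+a+2*K+1) * (\<mu>+a+2*K+2) - 2 * (a+K+1) * (\<mu>+a+2*K+1) * A2 + (a+K) * A1 * A2)"
    by (rule arg_cong)
  then show ?thesis
    unfolding t1 t2 t3 t4 t5 by (simp add: algebra_simps)
qed

lemma laguerre_series_coeff_identity:
  fixes \<mu> \<nu> x :: complex
  assumes \<mu>: "\<mu> \<notin> \<int>\<^sub>\<le>\<^sub>0" and \<nu>: "\<nu> + 2 \<noteq> 0"
  shows "laguerre_series_coeff \<mu> \<nu> x m - x / (\<nu> + 2) * seq_shift (laguerre_series_coeff \<mu> (\<nu> + 1) x) m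
       = hyp3F3_dup_coeff (\<nu> + 2) (\<mu> + \<nu> + 1) \<mu> x m
         + 2 * x / \<mu> * seq_shift (hyp3F3_dup_coeff (\<nu> + 2) (\<mu> + \<nu> + 2) (\<mu> + 1) x) m
         + x^2 / (\<mu> * (\<mu> + 1)) * seq_shift (seq_shift (hyp3F3_dup_coeff (\<nu> + 2) (\<mu> + \<nu> + 3) (\<mu> + 2) x)) m"
proof -
  have "\<mu> \<noteq> 0"
    using plus_of_nat_neq_0_if_notin_nonpos_Ints[OF \<mu>, of 0] by simp
  consider "m = 0" | "m = 1" | k where "m = k + 2"
    by atomize_elim presburger
  then show ?thesis
  proof cases
    case 1
    then show ?thesis
      using \<nu> by (simp add: laguerre_series_coeff_def hyp3F3_dup_coeff_def seq_shift_def)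
  next
    case 2
    have "laguerre_series_coeff \<mu> \<nu> x m - x / (\<nu> + 2) * seq_shift (laguerre_series_coeff \<mu> (\<nu> + 1) x) m
        = - x * (\<mu> + \<nu> + 1) / \<mu> - x / (\<nu> + 2)"
      using 2 \<nu> \<open>\<mu> \<noteq> 0\<close> by (simp add: laguerre_series_coeff_def seq_shift_def)
    moreover have "hyp3F3_dup_coeff (\<nu> + 2) (\<mu> + \<nu> + 1) \<mu> x m
         + 2 * x / \<mu> * seq_shift (hyp3F3_dup_coeff (\<nu> + 2) (\<mu> + \<nu> + 2) (\<mu> + 1) x) m
         + x^2 / (\<mu> * (\<mu> + 1)) * seq_shift (seq_shift (hyp3F3_dup_coeff (\<nu> + 2) (\<mu> + \<nu> + 3) (\<mu> + 2) x)) m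
        = (\<nu> + 3) / (\<nu> + 2) * (\<mu> + \<nu> + 2) / \<mu> * (- x) + 2 * x / \<mu>"
      using 2 \<nu> by (simp add: hyp3F3_dup_coeff_def seq_shift_def add_ac)
    moreover have "- x * (\<mu> + \<nu> + 1) / \<mu> - x / (\<nu> + 2) = (\<nu> + 3) / (\<nu> + 2) * (\<mu> + \<nu> + 2) / \<mu> * (- x) + 2 * x / \<mu>"
      using \<nu> \<open>\<mu> \<noteq> 0\<close> by (simp add: divide_simps) (simp add: algebra_simps)
    ultimately show ?thesis
      by simp
  next
    case 3
    define P where "P = pochhammer (\<mu> + (\<nu> + 2) + of_nat k + 1) k"
    have shift: "seq_shift f (k + 2) = f (k + 1)" "seq_shift f (k + 1) = f k"
      for f :: "nat \<Rightarrow> complex"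
      by (simp_all add: seq_shift_def numeral_2_eq_2)
    have poch:
      "pochhammer (\<mu> + \<nu> + of_nat (k + 2)) (k + 2)
         = (\<mu> + (\<nu> + 2) + of_nat k) * P * (\<mu> + (\<nu> + 2) + 2 * of_nat k + 1)"
      "pochhammer (\<mu> + (\<nu> + 1) + of_nat (k + 1)) (k + 1) = (\<mu> + (\<nu> + 2) + of_nat k) * P"
      "pochhammer (\<mu> + \<nu> + 1 + of_nat (k + 2)) (k + 2)
         = P * (\<mu> + (\<nu> + 2) + 2 * of_nat k + 1) * (\<mu> + (\<nu> + 2) + 2 * of_nat k + 2)"
      "pochhammer (\<mu> + \<nu> + 2 + of_nat (k + 1)) (k + 1) = P * (\<mu> + (\<nu> + 2) + 2 * of_nat k + 1)"
      "pochhammer (\<mu> + \<nu> + 3 + of_nat k) k = P"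
      using pochhammer_add_2_left[of "\<mu> + \<nu> + of_nat (k + 2)" k]
        pochhammer_rec[of "\<mu> + (\<nu> + 1) + of_nat (k + 1)" k]
        pochhammer_add_2_right[of "\<mu> + \<nu> + 1 + of_nat (k + 2)" k]
        pochhammer_rec'[of "\<mu> + \<nu> + 2 + of_nat (k + 1)" k]
      by (simp_all add: P_def algebra_simps)
    have of_nat_shift: "\<nu> + 2 + of_nat (k + 2) = \<nu> + 2 + of_nat k + 2"
        "\<nu> + 2 + of_nat (k + 1) = \<nu> + 2 + of_nat k + 1"
      by simp_all
    show ?thesis
      unfolding 3 shift laguerre_series_coeff_def hyp3F3_dup_coeff_def poch of_nat_shift
      by (rule coeff_identity_add_2[OF \<mu> \<nu>, where x = x and P = P and k = k])
  qed
qed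

lemma laguerre_combination_series:
  fixes \<mu> \<nu> x :: complex
  assumes \<nu>: "\<nu> + 1 \<notin> \<int>\<^sub>\<le>\<^sub>0" and \<mu>: "\<mu> \<notin> \<int>\<^sub>\<le>\<^sub>0"
  shows "exp (- x) * (\<Sum>n. (- x) ^ n / pochhammer \<mu> n *
            (laguerre n \<nu> x - x / (\<nu> + 2) * laguerre n (\<nu> + 1) x))
       = (\<Sum>m. laguerre_series_coeff \<mu> \<nu> x m - x / (\<nu> + 2) * seq_shift (laguerre_series_coeff \<mu> (\<nu> + 1) x) m)"
proof -
  have "\<nu> + 1 + 1 \<notin> \<int>\<^sub>\<le>\<^sub>0"
    using plus_of_nat_notin_nonpos_Ints[OF \<nu>, of 1] by simp
  obtain S0 where
      L0: "(\<lambda>n. (-x)^n / pochhammer \<mu> n * laguerre n \<nu> x) sums (exp x * S0)"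
    and G0: "laguerre_series_coeff \<mu> \<nu> x sums S0"
    by (rule laguerre_double_series[OF \<nu> \<mu>])
  obtain S1 where
      L1: "(\<lambda>n. (-x)^n / pochhammer \<mu> n * laguerre n (\<nu> + 1) x) sums (exp x * S1)"
    and G1: "laguerre_series_coeff \<mu> (\<nu> + 1) x sums S1"
    by (rule laguerre_double_series[OF \<open>\<nu> + 1 + 1 \<notin> \<int>\<^sub>\<le>\<^sub>0\<close> \<mu>])
  have "(\<lambda>n. (- x) ^ n / pochhammer \<mu> n * (laguerre n \<nu> x - x / (\<nu> + 2) * laguerre n (\<nu> + 1) x))
      sums (exp x * S0 - x / (\<nu> + 2) * (exp x * S1))"
    using sums_diff[OF L0 sums_mult[OF L1, of "x / (\<nu> + 2)"]] by (simp add: algebra_simps)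
  then have "exp (- x) * (\<Sum>n. (- x) ^ n / pochhammer \<mu> n *
            (laguerre n \<nu> x - x / (\<nu> + 2) * laguerre n (\<nu> + 1) x)) = S0 - x / (\<nu> + 2) * S1"
    by (simp add: sums_iff algebra_simps exp_minus field_simps)
  moreover have "(\<lambda>m. laguerre_series_coeff \<mu> \<nu> x m - x / (\<nu> + 2) * seq_shift (laguerre_series_coeff \<mu> (\<nu> + 1) x) m)
      sums (S0 - x / (\<nu> + 2) * S1)"
    by (intro sums_diff sums_mult sums_seq_shift G0 G1)
  ultimately show ?thesis
    by (simp add: sums_iff)
qed

lemma hyp3F3_combination_sums:
  fixes \<mu> \<nu> x :: complex
  assumes \<nu>: "\<nu> + 2 \<notin> \<int>\<^sub>\<le>\<^sub>0" and \<mu>: "\<mu> \<notin> \<int>\<^sub>\<le>\<^sub>0" and \<mu>\<nu>: "\<mu> + \<nu> + 1 \<notin> \<int>\<^sub>\<le>\<^sub>0"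
  shows "(\<lambda>m. hyp3F3_dup_coeff (\<nu> + 2) (\<mu> + \<nu> + 1) \<mu> x m
         + 2 * x / \<mu> * seq_shift (hyp3F3_dup_coeff (\<nu> + 2) (\<mu> + \<nu> + 2) (\<mu> + 1) x) m
         + x^2 / (\<mu> * (\<mu> + 1)) * seq_shift (seq_shift (hyp3F3_dup_coeff (\<nu> + 2) (\<mu> + \<nu> + 3) (\<mu> + 2) x)) m)
    sums (hyp3F3 (\<nu> + 3) (\<mu>/2 + \<nu>/2 + 1) (\<mu>/2 + \<nu>/2 + 1/2) (\<nu> + 2) \<mu> (\<mu> + \<nu> + 1) (-4 * x)
         + 2 * x / \<mu> * hyp3F3 (\<nu> + 3) (\<mu>/2 + \<nu>/2 + 1) (\<mu>/2 + \<nu>/2 + 3/2) (\<nu> + 2) (\<mu> + 1) (\<mu> + \<nu> + 2) (-4 * x)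
         + x ^ 2 / (\<mu> * (\<mu> + 1)) * hyp3F3 (\<nu> + 3) (\<mu>/2 + \<nu>/2 + 2) (\<mu>/2 + \<nu>/2 + 3/2) (\<nu> + 2) (\<mu> + 2) (\<mu> + \<nu> + 3) (-4 * x))"
proof -
  have shifted: "\<mu> + 1 \<notin> \<int>\<^sub>\<le>\<^sub>0" "\<mu> + 2 \<notin> \<int>\<^sub>\<le>\<^sub>0" "\<mu> + \<nu> + 2 \<notin> \<int>\<^sub>\<le>\<^sub>0" "\<mu> + \<nu> + 3 \<notin> \<int>\<^sub>\<le>\<^sub>0"
    using plus_of_nat_notin_nonpos_Ints[OF \<mu>, of 1] plus_of_nat_notin_nonpos_Ints[OF \<mu>, of 2]
      plus_of_nat_notin_nonpos_Ints[OF \<mu>\<nu>, of 1] plus_of_nat_notin_nonpos_Ints[OF \<mu>\<nu>, of 2]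
    by (simp_all add: add.assoc)
  have "hyp3F3_dup_coeff (\<nu> + 2) (\<mu> + \<nu> + 1) \<mu> x
      sums hyp3F3 (\<nu> + 3) (\<mu>/2 + \<nu>/2 + 1/2) (\<mu>/2 + \<nu>/2 + 1) (\<nu> + 2) \<mu> (\<mu> + \<nu> + 1) (-4 * x)"
    using hyp3F3_duplication_sums[OF \<nu> \<mu> \<mu>\<nu>, of "\<mu>/2 + \<nu>/2 + 1/2" "\<mu>/2 + \<nu>/2 + 1" x]
    by (simp add: field_simps)
  moreover have "hyp3F3_dup_coeff (\<nu> + 2) (\<mu> + \<nu> + 2) (\<mu> + 1) x
      sums hyp3F3 (\<nu> + 3) (\<mu>/2 + \<nu>/2 + 1) (\<mu>/2 + \<nu>/2 + 3/2) (\<nu> + 2) (\<mu> + 1) (\<mu> + \<nu> + 2) (-4 * x)"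
    using hyp3F3_duplication_sums[OF \<nu> shifted(1) shifted(3), of "\<mu>/2 + \<nu>/2 + 1" "\<mu>/2 + \<nu>/2 + 3/2" x]
    by (simp add: field_simps)
  moreover have "hyp3F3_dup_coeff (\<nu> + 2) (\<mu> + \<nu> + 3) (\<mu> + 2) x
      sums hyp3F3 (\<nu> + 3) (\<mu>/2 + \<nu>/2 + 3/2) (\<mu>/2 + \<nu>/2 + 2) (\<nu> + 2) (\<mu> + 2) (\<mu> + \<nu> + 3) (-4 * x)"
    using hyp3F3_duplication_sums[OF \<nu> shifted(2) shifted(4), of "\<mu>/2 + \<nu>/2 + 3/2" "\<mu>/2 + \<nu>/2 + 2" x]
    by (simp add: field_simps)
  ultimately show ?thesis
    by (subst (1 3) hyp3F3_swap) (intro sums_add sums_mult sums_seq_shift)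
qed

theorem mainTheorem10:
  fixes \<nu> \<mu> x :: complex
  assumes nu: "\<And>k::nat. \<nu> \<noteq> - of_nat (k + 1)"
      and mu: "\<And>k::nat. \<mu> \<noteq> - of_nat k"
      and munu: "\<And>k::nat. \<mu> + \<nu> + 1 \<noteq> - of_nat k"
  shows "exp (- x) * (\<Sum>n. (- x) ^ n / pochhammer \<mu> n *
            (laguerre n \<nu> x - x / (\<nu> + 2) * laguerre n (\<nu> + 1) x))
         = hyp3F3 (\<nu> + 3) (\<mu>/2 + \<nu>/2 + 1) (\<mu>/2 + \<nu>/2 + 1/2) (\<nu> + 2) \<mu> (\<mu> + \<nu> + 1) (-4 * x)
           + 2 * x / \<mu> * hyp3F3 (\<nu> + 3) (\<mu>/2 + \<nu>/2 + 1) (\<mu>/2 + \<nu>/2 + 3/2) (\<nu> + 2) (\<mu> + 1) (\<mu> + \<nu> + 2) (-4 * x)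
           + x ^ 2 / (\<mu> * (\<mu> + 1)) * hyp3F3 (\<nu> + 3) (\<mu>/2 + \<nu>/2 + 2) (\<mu>/2 + \<nu>/2 + 3/2) (\<nu> + 2) (\<mu> + 2) (\<mu> + \<nu> + 3) (-4 * x)"
proof -
  have \<mu>: "\<mu> \<notin> \<int>\<^sub>\<le>\<^sub>0" and \<mu>\<nu>: "\<mu> + \<nu> + 1 \<notin> \<int>\<^sub>\<le>\<^sub>0"
    using mu munu by (simp_all add: notin_nonpos_Ints_iff)
  have \<nu>1: "\<nu> + 1 \<notin> \<int>\<^sub>\<le>\<^sub>0"
  proof
    assume "\<nu> + 1 \<in> \<int>\<^sub>\<le>\<^sub>0"
    then obtain n where "\<nu> + 1 = - of_nat n"
      by (elim nonpos_Ints_cases')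
    then have "\<nu> = - of_nat (n + 1)"
      by (simp add: algebra_simps eq_neg_iff_add_eq_0)
    with nu show False
      by blast
  qed
  then have \<nu>2: "\<nu> + 2 \<notin> \<int>\<^sub>\<le>\<^sub>0"
    using plus_of_nat_notin_nonpos_Ints[of "\<nu> + 1" 1] by (simp add: add.assoc)
  then have "\<nu> + 2 \<noteq> 0"
    by auto
  show ?thesis
    unfolding laguerre_combination_series[OF \<nu>1 \<mu>] laguerre_series_coeff_identity[OF \<mu> \<open>\<nu> + 2 \<noteq> 0\<close>]
    using hyp3F3_combination_sums[OF \<nu>2 \<mu> \<mu>\<nu>] by (simp add: sums_iff)
qed

end
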